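(* (i) For all $x,x'\in\mathcal S(p)$, $K_p^\ell(x,x')\le K_p^\ell(\min(x,x'),\min(x,x'))$. (ii) If $x\mapsto \mathbb E[\chi^\ell(X,x)]/p(x)$ is non-decreasing on $\mathcal S(p)$, then for each fixed $x'\in\mathcal S(p)$ the function $x\mapsto K_p^\ell(x,x')/p(x)$ is non-decreasing on $\{x\in\mathcal S(p): x<x'\}$. (iii) If $x\mapsto \mathbb E[\chi^{-\ell}(x,X)]/p(x)$ is non-increasing on $\mathcal S(p)$, then for each fixed $x'\in\mathcal S(p)$ the function $x\mapsto K_p^\ell(x,x')/p(x)$ is non-increasing on $\{x\in\mathcal S(p): x>x'\}$.
   Context: Let $\mu$ be either the counting measure on $\mathcal X=\mathbb Z$ or Lebesgue measure on $\mathcal X=\mathbb R$. Let $X$ be a random variable with density $p$ with respect to $\mu$ and support $\mathcal S(p)=\{x: p(x)>0\}$. Standing assumption: in the counting case $\mathcal S(p)=[a,b]\cap\mathbb Z$ for some $a<b\in\mathbb Z\cup\{\pm\infty\}$; in the Lebesgue case $\mathcal S(p)$ has interior $(a,b)$ and closure $[a,b]$ for some $a<b\in\mathbb R\cup\{\pm\infty\}$; $p$ is not a point mass. Fix $\ell\in\{-1,0,1\}$; $\ell=0$ is used with Lebesgue measure, $\ell=\pm1$ with counting measure. Set $a_\ell=\mathbb I[\ell=1]$, $\chi^{\ell}(x,y)=\mathbb I[x\le y-a_\ell]$ (so $\chi^{-\ell}$ is obtained by replacing $\ell$ with $-\ell$), and $K_p^{\ell}(x,x')=\mathbb E[\chi^\ell(X,x)\chi^\ell(X,x')]-\mathbb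 E[\chi^\ell(X,x)]\mathbb E[\chi^\ell(X,x')]$ for $x,x'\in\mathcal S(p)$. *)

theory Defs
  imports "HOL-Analysis.Analysis"
begin

text \<open>Generic setting: ambient type 'a (int for the counting case, real for the
Lebesgue case), reference measure mu, density p, index l in {-1,0,1}.\<close>

definition a_idx :: "int \<Rightarrow> 'a::linordered_idom" where
  "a_idx l = (if l = 1 then 1 else 0)"

definition chi :: "int \<Rightarrow> 'a::linordered_idom \<Rightarrow> 'a \<Rightarrow> real" where
  "chi l x y = (if x \<le> y - a_idx l then 1 else 0)"

definition expect :: "'a measure \<Rightarrow> ('a \<Rightarrow> real) \<Rightarrow> ('a \<Rightarrow> real) \<Rightarrow> real" where
  "expect mu p f = integral\<^sup>L (density mu (\<lambda>y. ennreal (p y))) f"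

definition supp :: "('a \<Rightarrow> real) \<Rightarrow> 'a set" where
  "supp p = {x. p x > 0}"

definition Kp :: "'a measure \<Rightarrow> ('a \<Rightarrow> real) \<Rightarrow> int \<Rightarrow> 'a::linordered_idom \<Rightarrow> 'a \<Rightarrow> real" where
  "Kp mu p l x x' =
     expect mu p (\<lambda>y. chi l y x * chi l y x')
     - expect mu p (\<lambda>y. chi l y x) * expect mu p (\<lambda>y. chi l y x')"

definition is_density :: "'a measure \<Rightarrow> ('a \<Rightarrow> real) \<Rightarrow> bool" where
  "is_density mu p \<longleftrightarrow> p \<in> borel_measurable mu \<and> (\<forall>x. 0 \<le> p x)
      \<and> (\<integral>\<^sup>+ x. ennreal (p x) \<partial>mu) = 1"

definition kernel_claims :: "('a::linordered_idom) measure \<Rightarrow> ('a \<Rightarrow> real) \<Rightarrow> int \<Rightarrow> bool" where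
  "kernel_claims mu p (l::int) \<longleftrightarrow>
    (\<forall>x\<in>supp p. \<forall>x'\<in>supp p.
        Kp mu p l x x' \<le> Kp mu p l (min x x') (min x x'))
  \<and> (monotone_on (supp p) (\<le>) (\<le>) (\<lambda>x. expect mu p (\<lambda>y. chi l y x) / p x)
      \<longrightarrow> (\<forall>x'\<in>supp p. monotone_on {x\<in>supp p. x < x'} (\<le>) (\<le>) (\<lambda>x. Kp mu p l x x' / p x)))
  \<and> (monotone_on (supp p) (\<le>) (\<ge>) (\<lambda>x. expect mu p (\<lambda>y. chi (-l) x y) / p x)
      \<longrightarrow> (\<forall>x'\<in>supp p. monotone_on {x\<in>supp p. x' < x} (\<le>) (\<ge>) (\<lambda>x. Kp mu p l x x' / p x)))"

end

theory Submission
  imports Defs "HOL-Probability.Probability_Measure"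
begin

text \<open>Since \<open>chi l y x * chi l y x' = chi l y (min x x')\<close>, the kernel is
  \<open>K(x,x') = F(min x x') - F(x)F(x')\<close> for the non-decreasing, \<open>[0,1]\<close>-valued function
  \<open>F(x) = E[chi l X x]\<close>; for \<open>x \<le> x'\<close> this is \<open>F(x)(1 - F(x'))\<close>, and
  \<open>E[chi (-l) x X] = 1 - F(x)\<close> because the two indicators are complementary almost surely.
  All three claims are then elementary facts about such products.\<close>

definition cov_kernel :: "('a::linorder \<Rightarrow> real) \<Rightarrow> 'a \<Rightarrow> 'a \<Rightarrow> real" where
  "cov_kernel F x x' = F (min x x') - F x * F x'"

lemma cov_kernel_le:
  assumes "x \<le> x'"
  shows "cov_kernel F x x' = F x * (1 - F x')"
  using assms by (simp add: cov_kernel_def min_def algebra_simps)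

lemma cov_kernel_ge:
  assumes "x' \<le> x"
  shows "cov_kernel F x x' = F x' * (1 - F x)"
  using assms by (simp add: cov_kernel_def min_def algebra_simps)

lemma cov_kernel_le_diag_min:
  assumes "mono F" and "\<And>x. 0 \<le> F x"
  shows "cov_kernel F x x' \<le> cov_kernel F (min x x') (min x x')"
proof (cases "x \<le> x'")
  case True
  then show ?thesis
    using assms monoD[OF assms(1) True]
    by (simp add: cov_kernel_le min_def mult_left_mono)
next
  case False
  then have "x' \<le> x" by simp
  then show ?thesis
    using False assms monoD[OF assms(1) \<open>x' \<le> x\<close>]
    by (simp add: cov_kernel_ge cov_kernel_le min_def mult_left_mono)
qed

lemma cov_kernel_div_mono_below:
  assumes mono: "monotone_on S (\<le>) (\<le>) (\<lambda>x. F x / p x)" and "F x' \<le> 1"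
  shows "monotone_on {x\<in>S. x < x'} (\<le>) (\<le>) (\<lambda>x. cov_kernel F x x' / p x)"
proof (rule monotone_onI)
  fix x y assume xy: "x \<in> {x\<in>S. x < x'}" "y \<in> {x\<in>S. x < x'}" "x \<le> y"
  then have "F x / p x * (1 - F x') \<le> F y / p y * (1 - F x')"
    using \<open>F x' \<le> 1\<close> by (intro mult_right_mono monotone_onD[OF mono]) auto
  then show "cov_kernel F x x' / p x \<le> cov_kernel F y x' / p y"
    using xy by (simp add: cov_kernel_le less_imp_le)
qed

lemma cov_kernel_div_antimono_above:
  assumes antimono: "monotone_on S (\<le>) (\<ge>) (\<lambda>x. (1 - F x) / p x)" and "0 \<le> F x'"
  shows "monotone_on {x\<in>S. x' < x} (\<le>) (\<ge>) (\<lambda>x. cov_kernel F x x' / p x)"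
proof (rule monotone_onI)
  fix x y assume xy: "x \<in> {x\<in>S. x' < x}" "y \<in> {x\<in>S. x' < x}" "x \<le> y"
  then have "F x' * ((1 - F y) / p y) \<le> F x' * ((1 - F x) / p x)"
    using \<open>0 \<le> F x'\<close> by (intro mult_left_mono monotone_onD[OF antimono]) auto
  then show "cov_kernel F y x' / p y \<le> cov_kernel F x x' / p x"
    using xy by (simp add: cov_kernel_ge less_imp_le)
qed

lemma chi_mult_chi: "chi l y x * chi l y x' = chi l y (min x x')"
  by (auto simp: chi_def min_def)

lemma Kp_eq_cov_kernel: "Kp mu p l x x' = cov_kernel (\<lambda>x. expect mu p (\<lambda>y. chi l y x)) x x'"
  by (simp add: Kp_def cov_kernel_def chi_mult_chi)

lemma kernel_claims_if_complement_AE: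
  fixes mu :: "'a::linordered_idom measure" and p :: "'a \<Rightarrow> real"
  defines "N \<equiv> density mu (\<lambda>y. ennreal (p y))"
  assumes "prob_space N"
    and meas: "\<And>x. (\<lambda>y. chi l y x) \<in> borel_measurable mu"
    and meas_compl: "\<And>x. (\<lambda>y. chi (-l) x y) \<in> borel_measurable mu"
    and compl_AE: "\<And>x. AE y in N. chi (-l) x y = 1 - chi l y x"
  shows "kernel_claims mu p l"
proof -
  interpret prob_space N by fact
  define F where "F x = expect mu p (\<lambda>y. chi l y x)" for x
  have F_eq: "F x = integral\<^sup>L N (\<lambda>y. chi l y x)" for x
    by (simp add: F_def expect_def N_def)
  have int: "integrable N (\<lambda>y. chi l y x)" for x
    by (rule integrable_const_bound[where B=1]) (use meas in \<open>auto simp: chi_def N_def\<close>)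
  have "mono F"
    by (rule monoI, unfold F_eq, rule integral_mono) (use int in \<open>auto simp: chi_def\<close>)
  have F_nonneg: "0 \<le> F x" for x
    unfolding F_eq by (rule integral_nonneg_AE) (simp add: chi_def)
  have F_le_1: "F x \<le> 1" for x
  proof -
    have "F x \<le> integral\<^sup>L N (\<lambda>y. 1)"
      unfolding F_eq by (rule integral_mono) (use int in \<open>auto simp: chi_def\<close>)
    then show ?thesis by (simp add: prob_space)
  qed
  have compl: "expect mu p (\<lambda>y. chi (-l) x y) = 1 - F x" for x
  proof -
    have "expect mu p (\<lambda>y. chi (-l) x y) = integral\<^sup>L N (\<lambda>y. 1 - chi l y x)"
      unfolding expect_def N_def[symmetric]
      by (rule integral_cong_AE) (use meas meas_compl compl_AE in \<open>auto simp: N_def\<close>)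
    also have "\<dots> = 1 - F x"
      using int[of x] by (simp add: F_eq prob_space)
    finally show ?thesis .
  qed
  show ?thesis
    unfolding kernel_claims_def Kp_eq_cov_kernel F_def[symmetric] compl
    using cov_kernel_le_diag_min[OF \<open>mono F\<close> F_nonneg]
      cov_kernel_div_mono_below[where F = F, OF _ F_le_1]
      cov_kernel_div_antimono_above[where F = F, OF _ F_nonneg]
    by blast
qed

lemma prob_space_density_is_density:
  assumes "is_density mu p"
  shows "prob_space (density mu (\<lambda>y. ennreal (p y)))"
  by (rule prob_spaceI) (use assms in \<open>simp add: is_density_def emeasure_density\<close>)

lemma kernel_claims_count_space:
  fixes p :: "int \<Rightarrow> real"
  assumes "is_density (count_space UNIV) p" and "l \<in> {-1, 1}"
  shows "kernel_claims (count_space UNIV) p l"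
proof (rule kernel_claims_if_complement_AE)
  show "prob_space (density (count_space UNIV) (\<lambda>y. ennreal (p y)))"
    using assms(1) by (rule prob_space_density_is_density)
  show "AE y in density (count_space UNIV) (\<lambda>y. ennreal (p y)). chi (-l) x y = 1 - chi l y x"
    for x
    using assms(2) by (auto simp: chi_def a_idx_def)
qed auto

lemma kernel_claims_lborel:
  fixes p :: "real \<Rightarrow> real"
  assumes "is_density lborel p"
  shows "kernel_claims lborel p 0"
proof (rule kernel_claims_if_complement_AE)
  have p_meas: "(\<lambda>y. ennreal (p y)) \<in> borel_measurable lborel"
    using assms by (simp add: is_density_def)
  have chi_0: "chi 0 y x = indicator {..x} y" for x y :: real
    by (simp add: chi_def a_idx_def indicator_def)
  show "prob_space (density lborel (\<lambda>y. ennreal (p y)))"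
    using assms by (rule prob_space_density_is_density)
  \<comment> \<open>the complement relation fails only on the null set \<open>{x}\<close>\<close>
  show "AE y in density lborel (\<lambda>y. ennreal (p y)). chi (-0) x y = 1 - chi 0 y x" for x
    unfolding AE_density[OF p_meas]
    using AE_lborel_singleton[of x] by eventually_elim (auto simp: chi_def a_idx_def)
  show "(\<lambda>y. chi 0 y x) \<in> borel_measurable lborel" for x :: real
    by (simp add: chi_0)
  show "(\<lambda>y. chi (-0) x y) \<in> borel_measurable lborel" for x :: real
    by (simp add: chi_def a_idx_def)
qed

theorem mainTheorem8:
  shows "(\<forall>(p::int \<Rightarrow> real) (l::int).
            is_density (count_space UNIV) p \<and> l \<in> {-1, 1} \<and>
            (\<exists>a b::ereal. a < b
               \<and> (a = -\<infinity> \<or> (\<exists>k::int. a = ereal (real_of_int k)))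
               \<and> (b = \<infinity> \<or> (\<exists>k::int. b = ereal (real_of_int k)))
               \<and> supp p = {x. a \<le> ereal (real_of_int x) \<and> ereal (real_of_int x) \<le> b})
          \<longrightarrow> kernel_claims (count_space UNIV) p l)
       \<and> (\<forall>p::real \<Rightarrow> real.
            is_density lborel p \<and>
            (\<exists>a b::ereal. a < b
               \<and> interior (supp p) = {x. a < ereal x \<and> ereal x < b}
               \<and> closure (supp p) = {x. a \<le> ereal x \<and> ereal x \<le> b})
          \<longrightarrow> kernel_claims lborel p 0)"
  using kernel_claims_count_space kernel_claims_lborel by blast

end
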